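(* In the setting below, let $M\in\mathcal M$ be a fixed model with $P_n(M)^{-1}e^{-\delta n}\to0$ as $n\to\infty$ for every $\delta>0$. Let $\tilde\theta^M_n=(\tilde\theta^M_{n,j})_{j=1}^p$ be an estimator (a function of $y_1,\dots,y_n$) that is unconditionally unbiased for $\theta^M_0$, and suppose there is a constant $C\in(0,\infty)$ such that for all $1\le j\le p$ and $n\ge1$ the distribution of $\sqrt n(\tilde\theta^M_{n,j}-\theta^M_{0,j})$ is sub-Gaussian with parameter $C$. Then for every $\varepsilon>0$, $$\lim_{n\to\infty}P\big(\|\tilde\theta^M_n-\theta^M_0\|_\infty>\varepsilon\,\big|\,S_n(\bar T_n)=M\big)=0.$$
   Context: Setting: $(y_i)_{i\ge1}$ are i.i.d. from a distribution $f^*$. $\{p_\theta:\theta\in\Theta\}$, $\Theta\subseteq\mathbb R^p$, is a regular exponential family with natural parameter $\theta$, sufficient statistic $T$, and log-likelihood $\ell_\theta(y)=\log p_\theta(y)$; $\bar T_n=n^{-1}\sum_{i=1}^nT(y_i)$. $\mathcal M$ is a countable set of submodels $M=\{p_\theta:\theta\in\Theta^M\}$, $\Theta^M\subseteq\Theta$. For each $n$, $S_n:\mathbb R^p\to\mathcal M$ is a model selection procedure applied to $\bar T_n$, and $P_n(M)=P_{f^*}(S_n(\bar T_n)=M)$ when $y_1,\dots,y_n$ are i.i.d. $f^*$. $f^*$ need not belong to any model. The target is $\theta^M_0=\arg\sup_{\theta\in\Theta^M}\mathbb E_{f^*}[\ell_\theta(y)]$ (assumed to exist). *)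

theory Defs
  imports "HOL-Probability.Probability"
begin

definition nat_param_space :: "'y measure \<Rightarrow> ('y \<Rightarrow> real^'p) \<Rightarrow> (real^'p) set" where
  "nat_param_space nu T = {\<theta>. (\<integral>\<^sup>+ y. ennreal (exp (\<theta> \<bullet> T y)) \<partial>nu) < \<infinity>}"

definition log_partition :: "'y measure \<Rightarrow> ('y \<Rightarrow> real^'p) \<Rightarrow> real^'p \<Rightarrow> real" where
  "log_partition nu T \<theta> = ln (enn2real (\<integral>\<^sup>+ y. ennreal (exp (\<theta> \<bullet> T y)) \<partial>nu))"

definition loglik :: "'y measure \<Rightarrow> ('y \<Rightarrow> real^'p) \<Rightarrow> real^'p \<Rightarrow> 'y \<Rightarrow> real" where
  "loglik nu T \<theta> y = \<theta> \<bullet> T y - log_partition nu T \<theta>"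

definition regular_expfam :: "'y measure \<Rightarrow> ('y \<Rightarrow> real^'p) \<Rightarrow> (real^'p) set \<Rightarrow> bool" where
  "regular_expfam nu T \<Theta> \<longleftrightarrow> T \<in> borel_measurable nu \<and> \<Theta> = nat_param_space nu T \<and>
     \<Theta> \<noteq> {} \<and> open \<Theta> \<and>
     (\<forall>\<theta>\<in>\<Theta>. 0 < (\<integral>\<^sup>+ y. ennreal (exp (\<theta> \<bullet> T y)) \<partial>nu))"

definition linf_norm :: "real^'p \<Rightarrow> real" where
  "linf_norm x = (MAX j\<in>UNIV. \<bar>x $ j\<bar>)"

definition subgaussian :: "'a measure \<Rightarrow> ('a \<Rightarrow> real) \<Rightarrow> real \<Rightarrow> bool" where
  "subgaussian P X \<sigma> \<longleftrightarrow> (\<forall>s::real. integrable P (\<lambda>\<omega>. exp (s * X \<omega>)) \<and>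
      (\<integral>\<omega>. exp (s * X \<omega>) \<partial>P) \<le> exp (s\<^sup>2 * \<sigma>\<^sup>2 / 2))"

end

theory Submission
  imports Defs
begin

text \<open>A Chernoff bound turns the sub-Gaussian
  hypothesis into \<open>P(\<parallel>\<theta>\<^sub>n - \<theta>\<^sub>0\<parallel>\<^sub>\<infinity> > \<epsilon>) \<le> 2 p e\<^sup>-\<^sup>\<delta>\<^sup>n\<close> with \<open>\<delta> = \<epsilon>\<^sup>2/(2C\<^sup>2)\<close> (union bound over
  the \<open>p\<close> coordinates), and conditioning on \<open>S\<^sub>n(T\<^sub>n) = M\<close> divides this by \<open>P\<^sub>n(M)\<close>, which by
  hypothesis decays slower than any exponential.\<close>

lemma subgaussian_uminus:
  assumes "subgaussian M X C"
  shows "subgaussian M (\<lambda>\<omega>. - X \<omega>) C"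
  unfolding subgaussian_def
proof
  fix s :: real
  from assms have "integrable M (\<lambda>\<omega>. exp ((- s) * X \<omega>)) \<and>
      (\<integral>\<omega>. exp ((- s) * X \<omega>) \<partial>M) \<le> exp ((- s)\<^sup>2 * C\<^sup>2 / 2)"
    unfolding subgaussian_def by blast
  then show "integrable M (\<lambda>\<omega>. exp (s * - X \<omega>)) \<and>
      (\<integral>\<omega>. exp (s * - X \<omega>) \<partial>M) \<le> exp (s\<^sup>2 * C\<^sup>2 / 2)"
    by simp
qed

lemma (in prob_space) subgaussian_upper_tail:
  assumes sg: "subgaussian M X C" and "C > 0" and "t > 0"
  shows "prob {\<omega>\<in>space M. X \<omega> \<ge> t} \<le> exp (- t\<^sup>2 / (2 * C\<^sup>2))"
proof -
  \<comment> \<open>Markov's inequality for \<open>exp (s X)\<close> at the optimal \<open>s = t / C\<^sup>2\<close>\<close>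
  define s where "s = t / C\<^sup>2"
  have "s > 0" using assms by (simp add: s_def)
  have int: "integrable M (\<lambda>\<omega>. exp (s * X \<omega>))"
    and mgf: "(\<integral>\<omega>. exp (s * X \<omega>) \<partial>M) \<le> exp (s\<^sup>2 * C\<^sup>2 / 2)"
    using sg unfolding subgaussian_def by auto
  have "{\<omega>\<in>space M. X \<omega> \<ge> t} = {\<omega>\<in>space M. exp (s * X \<omega>) \<ge> exp (s * t)}"
    using \<open>s > 0\<close> by auto
  moreover have "prob {\<omega>\<in>space M. exp (s * X \<omega>) \<ge> exp (s * t)}
      \<le> (\<integral>\<omega>. exp (s * X \<omega>) \<partial>M) / exp (s * t)"
    by (rule integral_Markov_inequality_measure[OF int, where A="space M"]) auto
  moreover have "(\<integral>\<omega>. exp (s * X \<omega>) \<partial>M) / exp (s * t) \<le> exp (s\<^sup>2 * C\<^sup>2 / 2) / exp (s * t)"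
    using mgf by (simp add: divide_right_mono)
  moreover have "exp (s\<^sup>2 * C\<^sup>2 / 2) / exp (s * t) = exp (- t\<^sup>2 / (2 * C\<^sup>2))"
    using \<open>C > 0\<close> by (simp add: exp_diff[symmetric] s_def field_simps power2_eq_square)
  ultimately show ?thesis by simp
qed

lemma (in prob_space) subgaussian_abs_tail:
  assumes sg: "subgaussian M X C" and "C > 0" and "t > 0"
    and X: "X \<in> borel_measurable M"
  shows "prob {\<omega>\<in>space M. \<bar>X \<omega>\<bar> \<ge> t} \<le> 2 * exp (- t\<^sup>2 / (2 * C\<^sup>2))"
proof -
  have "{\<omega>\<in>space M. \<bar>X \<omega>\<bar> \<ge> t} = {\<omega>\<in>space M. X \<omega> \<ge> t} \<union> {\<omega>\<in>space M. - X \<omega> \<ge> t}"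
    by auto
  also have "prob \<dots> \<le> prob {\<omega>\<in>space M. X \<omega> \<ge> t} + prob {\<omega>\<in>space M. - X \<omega> \<ge> t}"
    using X by (intro measure_Un_le) auto
  also have "\<dots> \<le> 2 * exp (- t\<^sup>2 / (2 * C\<^sup>2))"
    using subgaussian_upper_tail[OF sg] subgaussian_upper_tail[OF subgaussian_uminus[OF sg]]
      assms by fastforce
  finally show ?thesis .
qed

lemma linf_norm_gt_iff: "linf_norm (x :: real^'p) > e \<longleftrightarrow> (\<exists>j. \<bar>x $ j\<bar> > e)"
  unfolding linf_norm_def by (subst Max_gr_iff) auto

lemma borel_measurable_vec_nth [measurable]:
  "(f :: _ \<Rightarrow> real^'p) \<in> borel_measurable M \<Longrightarrow> (\<lambda>\<omega>. f \<omega> $ j) \<in> borel_measurable M"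
  by (rule borel_measurable_continuous_on) (intro continuous_intros)

lemma borel_measurable_linf_norm [measurable]:
  "(f :: _ \<Rightarrow> real^'p) \<in> borel_measurable M \<Longrightarrow> (\<lambda>\<omega>. linf_norm (f \<omega>)) \<in> borel_measurable M"
  unfolding linf_norm_def by measurable

lemma (in prob_space) subgaussian_linf_tail:
  fixes Z :: "'a \<Rightarrow> real^'p"
  assumes Z: "Z \<in> borel_measurable M" and "r > 0" and "C > 0" and "\<epsilon> > 0"
    and sg: "\<And>j. subgaussian M (\<lambda>\<omega>. r * (Z \<omega> $ j - z $ j)) C"
  shows "prob {\<omega>\<in>space M. linf_norm (Z \<omega> - z) > \<epsilon>}
           \<le> 2 * real CARD('p) * exp (- (r * \<epsilon>)\<^sup>2 / (2 * C\<^sup>2))"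
proof -
  define E where "E j = {\<omega>\<in>space M. \<bar>r * (Z \<omega> $ j - z $ j)\<bar> \<ge> r * \<epsilon>}" for j
  have E: "E j \<in> events" for j
    unfolding E_def using Z by measurable
  have "{\<omega>\<in>space M. linf_norm (Z \<omega> - z) > \<epsilon>} \<subseteq> (\<Union>j. E j)"
    using \<open>r > 0\<close> by (auto simp: linf_norm_gt_iff E_def abs_mult intro: less_imp_le)
  then have "prob {\<omega>\<in>space M. linf_norm (Z \<omega> - z) > \<epsilon>} \<le> prob (\<Union>j. E j)"
    using E by (intro finite_measure_mono) auto
  also have "\<dots> \<le> (\<Sum>j\<in>UNIV. prob (E j))"
    using E by (intro measure_UNION_le) auto
  also have "\<dots> \<le> (\<Sum>j\<in>(UNIV :: 'p set). 2 * exp (- (r * \<epsilon>)\<^sup>2 / (2 * C\<^sup>2)))"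
    unfolding E_def using assms
    by (intro sum_mono subgaussian_abs_tail[OF sg]) (auto intro: borel_measurable_vec_nth)
  finally show ?thesis by simp
qed

lemma (in prob_space) cond_prob_le_prob_div:
  assumes "{\<omega>\<in>space M. A \<omega>} \<in> events"
  shows "cond_prob M A B \<le> prob {\<omega>\<in>space M. A \<omega>} / prob {\<omega>\<in>space M. B \<omega>}"
  unfolding cond_prob_def using assms
  by (intro divide_right_mono finite_measure_mono) auto

theorem theorem3:
  fixes P :: "'a measure"                     \<comment> \<open>underlying probability space\<close>
    and Y :: "'y measure"                     \<comment> \<open>sample space\<close>
    and F :: "'y measure"                     \<comment> \<open>true distribution f*\<close>
    and y :: "nat \<Rightarrow> 'a \<Rightarrow> 'y"              \<comment> \<open>y (i-1) = y_i\<close>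
    and nu :: "'y measure" and T :: "'y \<Rightarrow> real^'p" and \<Theta> :: "(real^'p) set"
    and \<Theta>M :: "'m::countable \<Rightarrow> (real^'p) set"
    and S :: "nat \<Rightarrow> real^'p \<Rightarrow> 'm"
    and M :: 'm
    and \<theta>0 :: "real^'p"
    and est :: "nat \<Rightarrow> (nat \<Rightarrow> 'y) \<Rightarrow> real^'p"
    and C :: real
  defines "Tbar \<equiv> (\<lambda>n \<omega>. (1 / real n) *\<^sub>R (\<Sum>i<n. T (y i \<omega>)))"
  defines "Pn \<equiv> (\<lambda>n. prob_space.prob P {\<omega>\<in>space P. S n (Tbar n \<omega>) = M})"
  assumes P: "prob_space P"
    and F: "prob_space F" "sets F = sets Y"
    and y_rv: "\<And>i. y i \<in> measurable P Y"
    and y_indep: "prob_space.indep_vars P (\<lambda>_. Y) y UNIV"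
    and y_dist: "\<And>i. distr P Y (y i) = F"
    and expfam: "sets nu = sets Y" "regular_expfam nu T \<Theta>"
    and submodels: "\<And>M'. \<Theta>M M' \<subseteq> \<Theta>"
    and S_meas: "\<And>n. S n \<in> borel \<rightarrow>\<^sub>M count_space UNIV"
    and target: "\<theta>0 \<in> \<Theta>M M"
      "\<forall>\<theta>\<in>\<Theta>M M. integrable F (loglik nu T \<theta>)"
      "\<forall>\<theta>\<in>\<Theta>M M. (\<integral>u. loglik nu T \<theta> u \<partial>F) \<le> (\<integral>u. loglik nu T \<theta>0 u \<partial>F)"
    and rate_pos: "eventually (\<lambda>n. Pn n > 0) sequentially"
    and rate: "\<And>\<delta>. \<delta> > 0 \<Longrightarrow> (\<lambda>n. exp (- \<delta> * real n) / Pn n) \<longlonglongrightarrow> 0"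
    and est_fun: "\<And>n x x'. (\<forall>i<n. x i = x' i) \<Longrightarrow> est n x = est n x'"
    and est_rv: "\<And>n. (\<lambda>\<omega>. est n (\<lambda>i. y i \<omega>)) \<in> borel_measurable P"
    and unbiased: "\<And>n j. n \<ge> 1 \<Longrightarrow> integrable P (\<lambda>\<omega>. est n (\<lambda>i. y i \<omega>) $ j)"
      "\<And>n j. n \<ge> 1 \<Longrightarrow> (\<integral>\<omega>. est n (\<lambda>i. y i \<omega>) $ j \<partial>P) = \<theta>0 $ j"
    and C: "0 < C"
    and subg: "\<And>n j. n \<ge> 1 \<Longrightarrow>
       subgaussian P (\<lambda>\<omega>. sqrt (real n) * (est n (\<lambda>i. y i \<omega>) $ j - \<theta>0 $ j)) C"
  shows "\<forall>\<epsilon>>0. (\<lambda>n. cond_prob P (\<lambda>\<omega>. linf_norm (est n (\<lambda>i. y i \<omega>) - \<theta>0) > \<epsilon>)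
                                  (\<lambda>\<omega>. S n (Tbar n \<omega>) = M)) \<longlonglongrightarrow> 0"
proof (intro allI impI)
  fix \<epsilon> :: real assume "\<epsilon> > 0"
  interpret prob_space P by (rule P)
  define \<delta> where "\<delta> = \<epsilon>\<^sup>2 / (2 * C\<^sup>2)"
  define K where "K = 2 * real CARD('p)"
  let ?cp = "\<lambda>n. cond_prob P (\<lambda>\<omega>. linf_norm (est n (\<lambda>i. y i \<omega>) - \<theta>0) > \<epsilon>)
                              (\<lambda>\<omega>. S n (Tbar n \<omega>) = M)"
  have cp_bound: "?cp n \<le> K * (exp (- \<delta> * real n) / Pn n)" if "n \<ge> 1" "Pn n > 0" for n
  proof -
    let ?A = "{\<omega>\<in>space P. linf_norm (est n (\<lambda>i. y i \<omega>) - \<theta>0) > \<epsilon>}"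
    have "?A \<in> events"
      using est_rv[of n] by measurable
    then have "?cp n \<le> prob ?A / Pn n"
      unfolding Pn_def by (rule cond_prob_le_prob_div)
    also have "prob ?A \<le> K * exp (- \<delta> * real n)"
      using subgaussian_linf_tail[OF est_rv _ C \<open>\<epsilon> > 0\<close> subg] that
      by (simp add: K_def \<delta>_def power_mult_distrib algebra_simps)
    then have "prob ?A / Pn n \<le> K * exp (- \<delta> * real n) / Pn n"
      using \<open>Pn n > 0\<close> by (simp add: divide_right_mono)
    finally show ?thesis by simp
  qed
  have lower: "\<forall>\<^sub>F n in sequentially. 0 \<le> ?cp n"
    by (simp add: cond_prob_def)
  have upper: "\<forall>\<^sub>F n in sequentially. ?cp n \<le> K * (exp (- \<delta> * real n) / Pn n)"
    using rate_pos eventually_ge_at_top[of 1] by eventually_elim (rule cp_bound)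
  have "\<delta> > 0"
    using \<open>\<epsilon> > 0\<close> C by (simp add: \<delta>_def)
  then have "(\<lambda>n. K * (exp (- \<delta> * real n) / Pn n)) \<longlonglongrightarrow> 0"
    by (intro tendsto_mult_right_zero rate)
  then show "?cp \<longlonglongrightarrow> 0"
    by (rule tendsto_sandwich[OF lower upper tendsto_const])
qed

end
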